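(* Let $n, m \in \mathbb{N}$. Then $\chi_{\star,m}(G_n^\infty) = n+1$ and $\widehat{K}_{\star,m}(G_n^\infty) \le n!\, m^n$.
   Context: Let $G$ be a graph with vertex set $V$, with the graph (shortest path) distance, and let $n, m \in \mathbb{N}$. A function $f \colon V \to \{1,\dots,n\}$ is an $m$-distance clustered $n$-coloring of $G$ if there is a constant $K_\star > 0$ such that for every $i$, every connected component of the subgraph induced by $f^{-1}[\{i\}]$ has at most $K_\star$ vertices, and the distance in $G$ between any two distinct such components (of the same color $i$) is bigger than $m$. The $m$-distance clustered chromatic number $\chi_{\star,m}(G)$ is the least $n \in \mathbb{N}$ for which an $m$-distance clustered $n$-coloring of $G$ exists, and $\infty$ if none exists. If $\chi_{\star,m}(G)$ is finite, $\widehat{K}_{\star,m}(G)$ denotes the minimum constant $K_\star$ over all $m$-distance clustered $\chi_{\star,m}(G)$-colorings of $G$. $G_n^\infty$ is the graph with vertex set $\mathbb{Z}^n$ in which $x,y$ are adjacent iff $\|x-y\|_\infty = 1$ (so its graph distance is the $\ell^\infty$ distance). *)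

theory Defs
  imports Main "HOL-Library.Extended_Nat"
begin

definition is_walk :: "'a set \<Rightarrow> ('a \<Rightarrow> 'a \<Rightarrow> bool) \<Rightarrow> 'a \<Rightarrow> 'a \<Rightarrow> nat \<Rightarrow> bool" where
  "is_walk V E x y k \<longleftrightarrow>
     (\<exists>p :: nat \<Rightarrow> 'a. p 0 = x \<and> p k = y \<and> (\<forall>i\<le>k. p i \<in> V) \<and>
        (\<forall>i<k. E (p i) (p (Suc i))))"

text \<open>Graph (shortest path) distance; \<open>\<infinity>\<close> if there is no path.\<close>
definition gdist :: "'a set \<Rightarrow> ('a \<Rightarrow> 'a \<Rightarrow> bool) \<Rightarrow> 'a \<Rightarrow> 'a \<Rightarrow> enat" where
  "gdist V E x y = (INF k \<in> {k. is_walk V E x y k}. enat k)"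

definition setdist :: "'a set \<Rightarrow> ('a \<Rightarrow> 'a \<Rightarrow> bool) \<Rightarrow> 'a set \<Rightarrow> 'a set \<Rightarrow> enat" where
  "setdist V E A B = (INF p \<in> A \<times> B. gdist V E (fst p) (snd p))"

definition induced_comp :: "('a \<Rightarrow> 'a \<Rightarrow> bool) \<Rightarrow> 'a set \<Rightarrow> 'a \<Rightarrow> 'a set" where
  "induced_comp E S x = {y. (\<lambda>u v. u \<in> S \<and> v \<in> S \<and> E u v)\<^sup>*\<^sup>* x y}"

definition induced_components :: "('a \<Rightarrow> 'a \<Rightarrow> bool) \<Rightarrow> 'a set \<Rightarrow> 'a set set" where
  "induced_components E S = induced_comp E S ` S"

definition mdist_clustered_coloring ::
  "'a set \<Rightarrow> ('a \<Rightarrow> 'a \<Rightarrow> bool) \<Rightarrow> nat \<Rightarrow> nat \<Rightarrow> nat \<Rightarrow> ('a \<Rightarrow> nat) \<Rightarrow> bool" where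
  "mdist_clustered_coloring V E m N K f \<longleftrightarrow>
     K > 0 \<and> (\<forall>x\<in>V. f x \<in> {1..N}) \<and>
     (\<forall>i\<in>{1..N}. \<forall>C \<in> induced_components E {x\<in>V. f x = i}.
         finite C \<and> card C \<le> K) \<and>
     (\<forall>i\<in>{1..N}. \<forall>C \<in> induced_components E {x\<in>V. f x = i}.
         \<forall>D \<in> induced_components E {x\<in>V. f x = i}.
           C \<noteq> D \<longrightarrow> setdist V E C D > enat m)"

definition chi_star :: "'a set \<Rightarrow> ('a \<Rightarrow> 'a \<Rightarrow> bool) \<Rightarrow> nat \<Rightarrow> enat" where
  "chi_star V E m =
     (if \<exists>N K f. mdist_clustered_coloring V E m N K f
      then enat (LEAST N. \<exists>K f. mdist_clustered_coloring V E m N K f)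
      else \<infinity>)"

text \<open>Minimal clustering constant among colorings with chi_star colors
  (component sizes are integers, so the minimal constant is a natural number).\<close>
definition K_hat :: "'a set \<Rightarrow> ('a \<Rightarrow> 'a \<Rightarrow> bool) \<Rightarrow> nat \<Rightarrow> nat" where
  "K_hat V E m = (LEAST K. \<exists>f. mdist_clustered_coloring V E m (the_enat (chi_star V E m)) K f)"

text \<open>The graph G_n^\<infinity>: vertices Z^n, represented as functions nat \<Rightarrow> int vanishing
  outside {..<n}; adjacent iff the l-infinity distance is 1.\<close>
definition Zn :: "nat \<Rightarrow> (nat \<Rightarrow> int) set" where
  "Zn n = {x. \<forall>i\<ge>n. x i = 0}"

definition linf_dist :: "nat \<Rightarrow> (nat \<Rightarrow> int) \<Rightarrow> (nat \<Rightarrow> int) \<Rightarrow> int" where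
  "linf_dist n x y = Max (insert 0 ((\<lambda>i. \<bar>x i - y i\<bar>) ` {..<n}))"

definition Ginf_adj :: "nat \<Rightarrow> (nat \<Rightarrow> int) \<Rightarrow> (nat \<Rightarrow> int) \<Rightarrow> bool" where
  "Ginf_adj n x y \<longleftrightarrow> linf_dist n x y = 1"

end

theory Submission
  imports Defs "HOL-Analysis.Brouwer_Fixpoint"
begin

text \<open>
  Upper bound: colour \<open>\<int>\<^sup>n\<close> one coordinate at a time. Once the first \<open>d\<close> coordinates carry a
  colour in \<open>{0..d}\<close>, cut the \<open>d\<close>-th axis into blocks of \<open>m\<close> consecutive integers and the
  blocks into runs of \<open>d + 1\<close> consecutive blocks, the runs aligned so that the index of their
  first block is congruent to the current colour modulo \<open>d + 1\<close>; the new colour is that index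
  modulo \<open>d + 2\<close>. Points lying in the same runs in every coordinate form a connected cluster of at
  most \<open>\<Prod>d<n. (d + 1) m = n! m\<^sup>n\<close> points, and two distinct clusters of the same colour are more
  than \<open>m\<close> apart in some coordinate, because equal colours with equal run starts force equal
  previous colours, while distinct congruent run starts are \<open>d + 2\<close> blocks apart.

  Lower bound: \<open>n\<close> colours never suffice, by the \<open>n\<close>-dimensional Hex theorem. Give a point of
  the grid \<open>[0, K + 1]\<^sup>n\<close> label \<open>1\<close> in direction \<open>j\<close> if it lies on the face \<open>x\<^sub>j = K + 1\<close> or has
  colour \<open>j + 1\<close> and its cluster reaches the layer \<open>x\<^sub>j = K\<close>. Clusters have at most \<open>K\<close> points,
  so the face \<open>x\<^sub>j = 0\<close> is labelled \<open>0\<close>, and Kuhn's combinatorial lemma yields a fully labelled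
  simplex, whose vertices are pairwise adjacent; this is contradictory.
\<close>

lemma linf_dist_le_iff:
  assumes "(k::int) \<ge> 0"
  shows "linf_dist n x y \<le> k \<longleftrightarrow> (\<forall>i<n. \<bar>x i - y i\<bar> \<le> k)"
  unfolding linf_dist_def using assms by (subst Max_le_iff) auto

lemma linf_dist_nonneg: "linf_dist n x y \<ge> 0"
  unfolding linf_dist_def by (rule Max_ge) auto

lemma Ginf_adj_iff:
  "Ginf_adj n x y \<longleftrightarrow> (\<forall>i<n. \<bar>x i - y i\<bar> \<le> 1) \<and> (\<exists>i<n. x i \<noteq> y i)"
proof -
  have "Ginf_adj n x y \<longleftrightarrow> linf_dist n x y \<le> 1 \<and> \<not> linf_dist n x y \<le> 0"
    unfolding Ginf_adj_def using linf_dist_nonneg[of n x y] by auto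
  then show ?thesis
    using linf_dist_le_iff[of 1 n x y] linf_dist_le_iff[of 0 n x y] by auto
qed

lemma symp_Ginf_adj: "symp (Ginf_adj n)"
  by (rule sympI) (auto simp: Ginf_adj_iff abs_minus_commute)

lemma is_walk_Ginf_adj_coord_le:
  assumes "is_walk V (Ginf_adj n) a b k" "i < n"
  shows "\<bar>a i - b i\<bar> \<le> int k"
proof -
  obtain p where p: "p 0 = a" "p k = b" "\<forall>j<k. Ginf_adj n (p j) (p (Suc j))"
    using assms(1) unfolding is_walk_def by blast
  have "\<bar>p 0 i - p j i\<bar> \<le> int j" if "j \<le> k" for j
    using that
  proof (induction j)
    case (Suc j)
    then have "\<bar>p j i - p (Suc j) i\<bar> \<le> 1"
      using p(3) assms(2) unfolding Ginf_adj_iff by auto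
    with Suc show ?case by simp
  qed simp
  with p show ?thesis by auto
qed

lemma gdist_Ginf_adj_ge:
  assumes "i < n" "\<bar>a i - b i\<bar> > int m"
  shows "gdist V (Ginf_adj n) a b \<ge> enat (Suc m)"
  unfolding gdist_def
proof (rule INF_greatest)
  fix k assume "k \<in> {k. is_walk V (Ginf_adj n) a b k}"
  then have "\<bar>a i - b i\<bar> \<le> int k" using is_walk_Ginf_adj_coord_le assms(1) by blast
  with assms(2) show "enat (Suc m) \<le> enat k" by simp
qed

lemma setdist_Ginf_adj_gt:
  assumes "\<And>a b. a \<in> C \<Longrightarrow> b \<in> D \<Longrightarrow> \<exists>i<n. \<bar>a i - b i\<bar> > int m"
  shows "Defs.setdist V (Ginf_adj n) C D > enat m"
proof -
  have "enat (Suc m) \<le> Defs.setdist V (Ginf_adj n) C D"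
    unfolding Defs.setdist_def
  proof (rule INF_greatest)
    fix p assume "p \<in> C \<times> D"
    then obtain i where "i < n" "\<bar>fst p i - snd p i\<bar> > int m" using assms by force
    then show "enat (Suc m) \<le> gdist V (Ginf_adj n) (fst p) (snd p)" by (rule gdist_Ginf_adj_ge)
  qed
  then show ?thesis by (simp add: Suc_ile_eq)
qed

definition induced_edge :: "('a \<Rightarrow> 'a \<Rightarrow> bool) \<Rightarrow> 'a set \<Rightarrow> 'a \<Rightarrow> 'a \<Rightarrow> bool" where
  "induced_edge E S = (\<lambda>u v. u \<in> S \<and> v \<in> S \<and> E u v)"

lemma induced_comp_eq: "induced_comp E S x = {y. (induced_edge E S)\<^sup>*\<^sup>* x y}"
  unfolding induced_comp_def induced_edge_def ..

lemma induced_edge_rtranclp_mono: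
  assumes "S \<subseteq> T" "(induced_edge E S)\<^sup>*\<^sup>* x y"
  shows "(induced_edge E T)\<^sup>*\<^sup>* x y"
proof -
  have "induced_edge E S \<le> induced_edge E T"
    using assms(1) unfolding induced_edge_def by auto
  then show ?thesis using assms(2) rtranclp_mono by blast
qed

lemma induced_edge_rtranclp_sym:
  assumes "symp E" "(induced_edge E S)\<^sup>*\<^sup>* x y"
  shows "(induced_edge E S)\<^sup>*\<^sup>* y x"
proof -
  have "symp (induced_edge E S)"
    using assms(1) unfolding induced_edge_def by (auto intro!: sympI dest: sympD)
  then show ?thesis using assms(2) by (blast dest: sympD[OF symp_rtranclp])
qed

lemma rtranclp_intermediate_value:
  fixes f :: "'a \<Rightarrow> int"
  assumes "R\<^sup>*\<^sup>* a b" "\<And>u v. R u v \<Longrightarrow> \<bar>f u - f v\<bar> \<le> 1" "f a \<le> t" "t \<le> f b"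
  shows "\<exists>z. R\<^sup>*\<^sup>* a z \<and> f z = t"
  using assms(1,4)
proof (induction rule: rtranclp_induct)
  case base
  with assms(3) show ?case by (intro exI[of _ a]) auto
next
  case (step y z)
  show ?case
  proof (cases "t \<le> f y")
    case True
    then show ?thesis using step.IH by blast
  next
    case False
    with step.prems assms(2)[OF step.hyps(2)] have "f z = t" by linarith
    with step.hyps show ?thesis by (blast intro: rtranclp.rtrancl_into_rtrancl)
  qed
qed

definition round_down_cong :: "nat \<Rightarrow> int \<Rightarrow> int \<Rightarrow> int" where
  "round_down_cong k c t = t - (t - c) mod int k"

lemma round_down_cong_bounds:
  assumes "k > 0"
  shows "round_down_cong k c t \<le> t" "t < round_down_cong k c t + int k"
    "round_down_cong k c t mod int k = c mod int k"
  using assms by (simp_all add: round_down_cong_def pos_mod_sign pos_mod_bound mod_diff_right_eq)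

lemma round_down_cong_unique:
  assumes "k > 0" "u \<le> t" "t < u + int k" "u mod int k = c mod int k"
  shows "round_down_cong k c t = u"
proof -
  have "(t - c) mod int k = (t - u) mod int k"
    by (metis assms(4) mod_diff_right_eq)
  also have "\<dots> = t - u" using assms(1-3) by (intro mod_pos_pos_trivial) auto
  finally show ?thesis unfolding round_down_cong_def by simp
qed

lemma distinct_cong_windows_gap:
  fixes u v s t :: int
  assumes "u \<noteq> v" "u mod int (Suc k) = v mod int (Suc k)"
    and "u \<le> s" "s < u + int k" "v \<le> t" "t < v + int k"
  shows "\<bar>s - t\<bar> \<ge> 2"
proof -
  have "int (Suc k) dvd u - v" using assms(2) by (simp add: mod_eq_dvd_iff)
  then have "\<bar>int (Suc k)\<bar> \<le> \<bar>u - v\<bar>" using assms(1) by (intro dvd_imp_le_int) auto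
  with assms(3-6) show ?thesis by simp
qed

lemma div_mult_bounds:
  fixes t m :: int
  assumes "m > 0"
  shows "t div m * m \<le> t" "t < (t div m + 1) * m"
proof -
  have t: "t div m * m + t mod m = t" by (rule div_mult_mod_eq)
  then show "t div m * m \<le> t" using pos_mod_sign[OF assms, of t] by linarith
  from t show "t < (t div m + 1) * m"
    unfolding distrib_right using pos_mod_bound[OF assms, of t] by linarith
qed

lemma div_gap_imp_gt:
  fixes a b m :: int
  assumes "m > 0" "a div m + 2 \<le> b div m"
  shows "a + m < b"
proof -
  have "(a div m + 2) * m \<le> b div m * m"
    using assms by (intro mult_right_mono) auto
  with div_mult_bounds[OF assms(1), of a] div_mult_bounds[OF assms(1), of b]
  show ?thesis by (simp add: algebra_simps)
qed

lemma abs_div_gap_imp_gt: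
  fixes a b m :: int
  assumes "m > 0" "\<bar>a div m - b div m\<bar> \<ge> 2"
  shows "\<bar>a - b\<bar> > m"
  using div_gap_imp_gt[OF assms(1), of a b] div_gap_imp_gt[OF assms(1), of b a] assms(2)
  by linarith

text \<open>
  \<open>cluster_key m d x\<close> lists, from the last coordinate down, the first block index \<open>u\<close> of the run
  containing the block \<open>x i div m\<close>, for \<open>i < d\<close>; the run has length \<open>i + 1\<close> and \<open>u\<close> is congruent
  to the colour of the first \<open>i\<close> coordinates.
\<close>

fun cluster_colour :: "nat \<Rightarrow> nat \<Rightarrow> (nat \<Rightarrow> int) \<Rightarrow> int" where
  "cluster_colour m 0 x = 0"
| "cluster_colour m (Suc d) x =
     round_down_cong (Suc d) (cluster_colour m d x) (x d div int m) mod int (Suc (Suc d))"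

fun cluster_key :: "nat \<Rightarrow> nat \<Rightarrow> (nat \<Rightarrow> int) \<Rightarrow> int list" where
  "cluster_key m 0 x = []"
| "cluster_key m (Suc d) x =
     round_down_cong (Suc d) (cluster_colour m d x) (x d div int m) # cluster_key m d x"

lemma cluster_colour_bounds: "0 \<le> cluster_colour m d x \<and> cluster_colour m d x \<le> int d"
proof (cases d)
  case (Suc e)
  define r where "r = round_down_cong (Suc e) (cluster_colour m e x) (x e div int m)"
  have "cluster_colour m d x = r mod int (Suc (Suc e))"
    using Suc by (simp add: r_def)
  moreover have "0 \<le> r mod int (Suc (Suc e))" "r mod int (Suc (Suc e)) < int (Suc (Suc e))"
    by simp_all
  moreover have "int d = int (Suc (Suc e)) - 1" using Suc by simp
  ultimately show ?thesis by linarith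
qed simp

lemma cluster_colour_mod: "cluster_colour m d x mod int (Suc d) = cluster_colour m d x"
  using cluster_colour_bounds[of m d x] by (intro mod_pos_pos_trivial) auto

lemma cluster_colour_eq_if_key_eq:
  "cluster_key m d x = cluster_key m d y \<Longrightarrow> cluster_colour m d x = cluster_colour m d y"
  by (cases d) auto

lemma cluster_colour_key_cong:
  "(\<forall>i<d. x i = y i) \<Longrightarrow>
     cluster_colour m d x = cluster_colour m d y \<and> cluster_key m d x = cluster_key m d y"
  by (induction d) auto

lemma cluster_key_extend:
  assumes "d \<le> n" "cluster_key m d x = cluster_key m d y" "\<forall>i. d \<le> i \<and> i < n \<longrightarrow> x i = y i"
  shows "cluster_key m n x = cluster_key m n y"
  using assms
proof (induction n)
  case (Suc n)
  show ?case
  proof (cases "d = Suc n")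
    case False
    with Suc.prems have "d \<le> n" "x n = y n" by auto
    then have "cluster_key m n x = cluster_key m n y"
      by (intro Suc.IH) (use Suc.prems in auto)
    moreover from this have "cluster_colour m n x = cluster_colour m n y"
      by (rule cluster_colour_eq_if_key_eq)
    ultimately show ?thesis using \<open>x n = y n\<close> by simp
  qed (use Suc.prems(2) in simp)
qed simp

lemma cluster_key_neq_imp_far:
  assumes "m \<ge> 1"
  shows "cluster_colour m d x = cluster_colour m d y \<Longrightarrow> cluster_key m d x \<noteq> cluster_key m d y
    \<Longrightarrow> \<exists>i<d. \<bar>x i - y i\<bar> > int m"
proof (induction d)
  case (Suc d)
  show ?case
  proof (cases "cluster_colour m d x = cluster_colour m d y \<and> cluster_key m d x \<noteq> cluster_key m d y")
    case True
    then show ?thesis using Suc.IH less_SucI by blast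
  next
    case False
    define u where "u = round_down_cong (Suc d) (cluster_colour m d x) (x d div int m)"
    define v where "v = round_down_cong (Suc d) (cluster_colour m d y) (y d div int m)"
    have u_bounds: "u \<le> x d div int m" "x d div int m < u + int (Suc d)"
        "u mod int (Suc d) = cluster_colour m d x mod int (Suc d)"
      unfolding u_def by (rule round_down_cong_bounds; simp)+
    have v_bounds: "v \<le> y d div int m" "y d div int m < v + int (Suc d)"
        "v mod int (Suc d) = cluster_colour m d y mod int (Suc d)"
      unfolding v_def by (rule round_down_cong_bounds; simp)+
    have "u \<noteq> v"
    proof
      assume "u = v"
      then have "cluster_colour m d x mod int (Suc d) = cluster_colour m d y mod int (Suc d)"
        using u_bounds(3) v_bounds(3) by simp
      then have "cluster_colour m d x = cluster_colour m d y"
        by (simp only: cluster_colour_mod)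
      with False \<open>u = v\<close> have "cluster_key m (Suc d) x = cluster_key m (Suc d) y"
        by (simp add: u_def v_def)
      with Suc.prems(2) show False ..
    qed
    moreover have "u mod int (Suc (Suc d)) = v mod int (Suc (Suc d))"
      using Suc.prems(1) by (simp add: u_def v_def)
    ultimately have "\<bar>x d div int m - y d div int m\<bar> \<ge> 2"
      using u_bounds(1,2) v_bounds(1,2) by (rule distinct_cong_windows_gap)
    then have "\<bar>x d - y d\<bar> > int m"
      using assms by (intro abs_div_gap_imp_gt) auto
    then show ?thesis by auto
  qed
qed simp

lemma card_cluster_key_class_le:
  assumes "m \<ge> 1"
  shows "finite {y \<in> Zn d. cluster_key m d y = cluster_key m d x} \<and>
    card {y \<in> Zn d. cluster_key m d y = cluster_key m d x} \<le> fact d * m ^ d"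
proof (induction d arbitrary: x)
  case 0
  have "{y \<in> Zn 0. cluster_key m 0 y = cluster_key m 0 x} = {\<lambda>_. 0}"
    by (auto simp: Zn_def)
  then show ?case by simp
next
  case (Suc d)
  define B where "B = {y \<in> Zn (Suc d). cluster_key m (Suc d) y = cluster_key m (Suc d) x}"
  define A where "A = {y \<in> Zn d. cluster_key m d y = cluster_key m d x}"
  define u where "u = round_down_cong (Suc d) (cluster_colour m d x) (x d div int m)"
  define I where "I = {u * int m ..< (u + int (Suc d)) * int m}"
  have m_pos: "int m > 0" using assms by simp
  have B_sub: "B \<subseteq> (\<lambda>(y, t). y(d := t)) ` (A \<times> I)"
  proof
    fix z assume "z \<in> B"
    then have z: "z \<in> Zn (Suc d)" "cluster_key m (Suc d) z = cluster_key m (Suc d) x" unfolding B_def by auto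
    then have key_d: "cluster_key m d z = cluster_key m d x"
      and run: "round_down_cong (Suc d) (cluster_colour m d z) (z d div int m) = u"
      by (simp_all add: u_def)
    have "cluster_colour m d z = cluster_colour m d x"
      using key_d by (rule cluster_colour_eq_if_key_eq)
    with run have "u \<le> z d div int m" "z d div int m < u + int (Suc d)"
      using round_down_cong_bounds(1,2)[of "Suc d"] by fastforce+
    then have "u * int m \<le> z d div int m * int m" "(z d div int m + 1) * int m \<le> (u + int (Suc d)) * int m"
      using m_pos by (intro mult_right_mono; simp)+
    then have "z d \<in> I"
      using div_mult_bounds[OF m_pos, of "z d"] unfolding I_def by auto
    moreover have "z(d := 0) \<in> A"
      using z(1) key_d cluster_colour_key_cong[of d "z(d := 0)" z m]
      unfolding A_def Zn_def by (auto simp: Suc_le_eq)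
    ultimately show "z \<in> (\<lambda>(y, t). y(d := t)) ` (A \<times> I)"
      by (intro image_eqI[where x = "(z(d := 0), z d)"]) auto
  qed
  have "finite A" "card A \<le> fact d * m ^ d"
    using Suc.IH[of x] unfolding A_def by auto
  moreover have "finite I" "card I = Suc d * m"
  proof -
    have "(u + int (Suc d)) * int m - u * int m = int (Suc d * m)" by (simp add: algebra_simps)
    then show "card I = Suc d * m" unfolding I_def card_atLeastLessThan_int by (simp only: nat_int)
    show "finite I" unfolding I_def by simp
  qed
  ultimately have fin: "finite ((\<lambda>(y, t). y(d := t)) ` (A \<times> I))" by simp
  have "card B \<le> card ((\<lambda>(y, t). y(d := t)) ` (A \<times> I))"
    using fin B_sub by (rule card_mono)
  also have "\<dots> \<le> card A * card I"
    using card_image_le[OF finite_cartesian_product] \<open>finite A\<close> \<open>finite I\<close>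
    by (simp add: card_cartesian_product)
  also have "\<dots> \<le> fact d * m ^ d * (Suc d * m)"
    unfolding \<open>card I = _\<close> using \<open>card A \<le> _\<close> by (rule mult_right_mono) simp
  also have "\<dots> = fact (Suc d) * m ^ Suc d" by (simp add: algebra_simps)
  finally show ?case using finite_subset[OF B_sub fin] unfolding B_def by simp
qed

lemma coord_line_induced_rtranclp:
  assumes "d < n" "a \<le> b" "\<And>t. a \<le> t \<Longrightarrow> t \<le> b \<Longrightarrow> y(d := t) \<in> S"
  shows "(induced_edge (Ginf_adj n) S)\<^sup>*\<^sup>* (y(d := a)) (y(d := b))"
proof -
  have "(induced_edge (Ginf_adj n) S)\<^sup>*\<^sup>* (y(d := a)) (y(d := a + int j))" if "a + int j \<le> b" for j
    using that
  proof (induction j)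
    case (Suc j)
    have "Ginf_adj n (y(d := a + int j)) (y(d := a + int (Suc j)))"
      unfolding Ginf_adj_iff using assms(1) by auto
    moreover have "y(d := a + int j) \<in> S" "y(d := a + int (Suc j)) \<in> S"
      using Suc.prems by (intro assms(3); simp)+
    ultimately have "induced_edge (Ginf_adj n) S (y(d := a + int j)) (y(d := a + int (Suc j)))"
      unfolding induced_edge_def by blast
    moreover have "(induced_edge (Ginf_adj n) S)\<^sup>*\<^sup>* (y(d := a)) (y(d := a + int j))"
      by (rule Suc.IH) (use Suc.prems in simp)
    ultimately show ?case by (simp only: rtranclp.rtrancl_into_rtrancl)
  qed simp
  from this[of "nat (b - a)"] show ?thesis using assms(2) by simp
qed

lemma cluster_key_fun_upd_between:
  assumes "m \<ge> 1" "cluster_key m (Suc d) x = cluster_key m (Suc d) y"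
    and "min (x d) (y d) \<le> t" "t \<le> max (x d) (y d)"
  shows "cluster_key m (Suc d) (y(d := t)) = cluster_key m (Suc d) y"
proof -
  define u where "u = round_down_cong (Suc d) (cluster_colour m d y) (y d div int m)"
  have key_d: "cluster_key m d x = cluster_key m d y"
    and run: "round_down_cong (Suc d) (cluster_colour m d x) (x d div int m) = u"
    using assms(2) by (simp_all add: u_def)
  have "cluster_colour m d x = cluster_colour m d y"
    using key_d by (rule cluster_colour_eq_if_key_eq)
  with run have x_run: "u \<le> x d div int m" "x d div int m < u + int (Suc d)"
    using round_down_cong_bounds(1,2)[of "Suc d"] by fastforce+
  have y_run: "u \<le> y d div int m" "y d div int m < u + int (Suc d)"
    "u mod int (Suc d) = cluster_colour m d y mod int (Suc d)"
    unfolding u_def by (rule round_down_cong_bounds; simp)+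
  have "min (x d) (y d) div int m \<le> t div int m" "t div int m \<le> max (x d) (y d) div int m"
    using assms(1,3,4) by (simp_all add: zdiv_mono1)
  then have "u \<le> t div int m" "t div int m < u + int (Suc d)"
    using x_run y_run by (simp_all add: min_def max_def split: if_splits)
  then have "round_down_cong (Suc d) (cluster_colour m d y) (t div int m) = u"
    using y_run(3) by (intro round_down_cong_unique) auto
  moreover have "cluster_colour m d (y(d := t)) = cluster_colour m d y \<and>
      cluster_key m d (y(d := t)) = cluster_key m d y"
    by (rule cluster_colour_key_cong) simp
  ultimately show ?thesis by (simp add: u_def)
qed

text \<open>
  To join two points of one key class, walk along coordinate \<open>d\<close>, on which segment the key is
  constant by the previous lemma, and join the remaining points by induction.
\<close>

lemma cluster_key_class_connected:
  assumes "m \<ge> 1"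
  shows "d \<le> n \<Longrightarrow> x \<in> Zn n \<Longrightarrow> y \<in> Zn n \<Longrightarrow> cluster_key m d x = cluster_key m d y
    \<Longrightarrow> \<forall>i\<ge>d. x i = y i
    \<Longrightarrow> (induced_edge (Ginf_adj n) {u \<in> Zn n. cluster_key m n u = cluster_key m n x})\<^sup>*\<^sup>* x y"
proof (induction d arbitrary: y)
  case 0
  then have "x = y" by auto
  then show ?case by simp
next
  case (Suc d)
  let ?S = "{u \<in> Zn n. cluster_key m n u = cluster_key m n x}"
  have "d < n" using Suc.prems(1) by simp
  define z where "z = y(d := x d)"
  have "(induced_edge (Ginf_adj n) ?S)\<^sup>*\<^sup>* x z"
  proof (rule Suc.IH)
    show "d \<le> n" "x \<in> Zn n" using Suc.prems(1,2) by simp_all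
    show "z \<in> Zn n" using Suc.prems(3) \<open>d < n\<close> by (auto simp: Zn_def z_def)
    have "cluster_key m d z = cluster_key m d y"
      using cluster_colour_key_cong[of d z y m] by (simp add: z_def)
    then show "cluster_key m d x = cluster_key m d z" using Suc.prems(4) by simp
    show "\<forall>i\<ge>d. x i = z i"
    proof (intro allI impI)
      fix i assume "d \<le> i"
      then consider "i = d" | "Suc d \<le> i" by linarith
      then show "x i = z i" using Suc.prems(5) by cases (simp_all add: z_def)
    qed
  qed
  moreover have "(induced_edge (Ginf_adj n) ?S)\<^sup>*\<^sup>* z y"
  proof -
    have key_n: "cluster_key m n y = cluster_key m n x"
      by (rule cluster_key_extend[OF Suc.prems(1) Suc.prems(4)[symmetric]]) (use Suc.prems(5) in auto)
    have on_segment: "y(d := t) \<in> ?S" if "min (x d) (y d) \<le> t" "t \<le> max (x d) (y d)" for t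
    proof -
      have "cluster_key m n (y(d := t)) = cluster_key m n y"
        by (rule cluster_key_extend[OF Suc.prems(1) cluster_key_fun_upd_between[OF assms Suc.prems(4) that]])
          auto
      moreover have "y(d := t) \<in> Zn n" using Suc.prems(3) \<open>d < n\<close> by (auto simp: Zn_def)
      ultimately show ?thesis using key_n by simp
    qed
    consider "x d \<le> y d" | "y d \<le> x d" by linarith
    then show ?thesis
    proof cases
      case 1
      then have "(induced_edge (Ginf_adj n) ?S)\<^sup>*\<^sup>* (y(d := x d)) (y(d := y d))"
        using on_segment by (intro coord_line_induced_rtranclp[OF \<open>d < n\<close>]) auto
      then show ?thesis by (simp add: z_def)
    next
      case 2
      then have "(induced_edge (Ginf_adj n) ?S)\<^sup>*\<^sup>* (y(d := y d)) (y(d := x d))"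
        using on_segment by (intro coord_line_induced_rtranclp[OF \<open>d < n\<close>]) auto
      then show ?thesis
        using induced_edge_rtranclp_sym[OF symp_Ginf_adj] by (simp add: z_def)
    qed
  qed
  ultimately show ?case by (rule rtranclp_trans)
qed

definition cluster_colouring :: "nat \<Rightarrow> nat \<Rightarrow> (nat \<Rightarrow> int) \<Rightarrow> nat" where
  "cluster_colouring m n x = nat (cluster_colour m n x) + 1"

lemma cluster_colouring_eq_iff:
  "cluster_colouring m n x = cluster_colouring m n y \<longleftrightarrow> cluster_colour m n x = cluster_colour m n y"
  unfolding cluster_colouring_def using cluster_colour_bounds[of m n x] cluster_colour_bounds[of m n y]
  by auto

lemma induced_comp_cluster_colouring:
  assumes "m \<ge> 1" "x \<in> Zn n"
  shows "induced_comp (Ginf_adj n) {z \<in> Zn n. cluster_colouring m n z = cluster_colouring m n x} x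
    = {y \<in> Zn n. cluster_key m n y = cluster_key m n x}"
    (is "induced_comp _ ?S x = ?C")
proof
  show "induced_comp (Ginf_adj n) ?S x \<subseteq> ?C"
  proof
    fix y assume "y \<in> induced_comp (Ginf_adj n) ?S x"
    then have "(induced_edge (Ginf_adj n) ?S)\<^sup>*\<^sup>* x y" by (simp add: induced_comp_eq)
    then show "y \<in> ?C"
    proof (induction rule: rtranclp_induct)
      case (step y z)
      then have yz: "y \<in> ?S" "z \<in> ?S" "Ginf_adj n y z" by (auto simp: induced_edge_def)
      then have "cluster_colour m n y = cluster_colour m n z"
        by (simp add: cluster_colouring_eq_iff[symmetric])
      moreover have "\<not> (\<exists>i<n. \<bar>y i - z i\<bar> > int m)"
        using yz(3) assms(1) unfolding Ginf_adj_iff by force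
      ultimately have "cluster_key m n y = cluster_key m n z"
        using cluster_key_neq_imp_far[OF assms(1)] by blast
      with step.IH yz(2) show ?case by simp
    qed (use assms(2) in simp)
  qed
next
  have "?C \<subseteq> ?S"
  proof
    fix y assume "y \<in> ?C"
    then show "y \<in> ?S"
      using cluster_colour_eq_if_key_eq[of m n y x] by (simp add: cluster_colouring_eq_iff)
  qed
  moreover have "(induced_edge (Ginf_adj n) ?C)\<^sup>*\<^sup>* x y" if "y \<in> ?C" for y
    using that assms(2)
    by (intro cluster_key_class_connected[OF assms(1) order_refl assms(2)]) (auto simp: Zn_def)
  ultimately show "?C \<subseteq> induced_comp (Ginf_adj n) ?S x"
    unfolding induced_comp_eq by (auto intro: induced_edge_rtranclp_mono[of ?C ?S])
qed

lemma induced_components_cluster_colouring: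
  assumes "m \<ge> 1" "C \<in> induced_components (Ginf_adj n) {x \<in> Zn n. cluster_colouring m n x = i}"
  obtains x where "x \<in> Zn n" "cluster_colouring m n x = i"
    "C = {y \<in> Zn n. cluster_key m n y = cluster_key m n x}"
proof -
  from assms(2) obtain x where x: "x \<in> Zn n" "cluster_colouring m n x = i"
    "C = induced_comp (Ginf_adj n) {z \<in> Zn n. cluster_colouring m n z = i} x"
    unfolding induced_components_def by auto
  with induced_comp_cluster_colouring[OF assms(1) x(1)] show ?thesis by (intro that) auto
qed

lemma mdist_clustered_coloring_cluster_colouring:
  assumes "m \<ge> 1"
  shows "mdist_clustered_coloring (Zn n) (Ginf_adj n) m (n + 1) (fact n * m ^ n)
    (cluster_colouring m n)"
  unfolding mdist_clustered_coloring_def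
proof (intro conjI ballI impI)
  show "0 < fact n * m ^ n" using assms by simp
next
  fix x assume "x \<in> Zn n"
  show "cluster_colouring m n x \<in> {1..n + 1}"
    unfolding cluster_colouring_def using cluster_colour_bounds[of m n x] by auto
next
  fix i C assume "C \<in> induced_components (Ginf_adj n) {x \<in> Zn n. cluster_colouring m n x = i}"
  then obtain x where "C = {y \<in> Zn n. cluster_key m n y = cluster_key m n x}"
    using induced_components_cluster_colouring[OF assms] by blast
  then show "finite C" "card C \<le> fact n * m ^ n"
    using card_cluster_key_class_le[OF assms, of n x] by auto
next
  fix i C D
  assume C_comp: "C \<in> induced_components (Ginf_adj n) {x \<in> Zn n. cluster_colouring m n x = i}"
    and D_comp: "D \<in> induced_components (Ginf_adj n) {x \<in> Zn n. cluster_colouring m n x = i}"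
    and "C \<noteq> D"
  obtain x where x: "cluster_colouring m n x = i"
    and C: "C = {z \<in> Zn n. cluster_key m n z = cluster_key m n x}"
    using induced_components_cluster_colouring[OF assms C_comp] .
  obtain y where y: "cluster_colouring m n y = i"
    and D: "D = {z \<in> Zn n. cluster_key m n z = cluster_key m n y}"
    using induced_components_cluster_colouring[OF assms D_comp] .
  from x y have xy: "cluster_colour m n x = cluster_colour m n y"
    by (simp add: cluster_colouring_eq_iff[symmetric])
  show "enat m < Defs.setdist (Zn n) (Ginf_adj n) C D"
  proof (rule setdist_Ginf_adj_gt)
    fix a b assume "a \<in> C" "b \<in> D"
    with C D \<open>C \<noteq> D\<close> have keys: "cluster_key m n a = cluster_key m n x"
      "cluster_key m n b = cluster_key m n y" "cluster_key m n a \<noteq> cluster_key m n b"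
      by auto
    have "cluster_colour m n a = cluster_colour m n b"
      using cluster_colour_eq_if_key_eq[OF keys(1)] cluster_colour_eq_if_key_eq[OF keys(2)] xy
      by simp
    then show "\<exists>i<n. \<bar>a i - b i\<bar> > int m"
      using keys(3) by (rule cluster_key_neq_imp_far[OF assms])
  qed
qed

definition lattice_point :: "nat \<Rightarrow> (nat \<Rightarrow> nat) \<Rightarrow> nat \<Rightarrow> int" where
  "lattice_point n x = (\<lambda>i. if i < n then int (x i) else 0)"

lemma lattice_point_Zn: "lattice_point n x \<in> Zn n"
  unfolding lattice_point_def Zn_def by auto

definition reaches_level :: "((nat \<Rightarrow> int) \<Rightarrow> nat) \<Rightarrow> nat \<Rightarrow> nat \<Rightarrow> int \<Rightarrow> (nat \<Rightarrow> int) \<Rightarrow> bool"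
  where "reaches_level f n j h z \<longleftrightarrow>
    (\<exists>y. (induced_edge (Ginf_adj n) {x \<in> Zn n. f x = Suc j})\<^sup>*\<^sup>* z y \<and> h \<le> y j)"

text \<open>
  Colour \<open>j + 1\<close> plays the role of the \<open>j\<close>-th player of the Hex game on the grid \<open>[0, K + 1]\<^sup>n\<close>:
  label \<open>1\<close> in direction \<open>j\<close> means being joined to the face \<open>x\<^sub>j = K + 1\<close>.
\<close>

definition kuhn_label :: "((nat \<Rightarrow> int) \<Rightarrow> nat) \<Rightarrow> nat \<Rightarrow> nat \<Rightarrow> (nat \<Rightarrow> nat) \<Rightarrow> nat \<Rightarrow> nat"
  where "kuhn_label f n K x j =
    (if x j = Suc K \<or> (f (lattice_point n x) = Suc j \<and> reaches_level f n j (int K) (lattice_point n x))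
     then 1 else 0)"

lemma mdist_clustered_coloring_range:
  assumes "mdist_clustered_coloring V E m N K f" "x \<in> V"
  shows "f x \<in> {1..N}"
  using assms(1)[unfolded mdist_clustered_coloring_def, THEN conjunct2, THEN conjunct1] assms(2)
  by blast

lemma mdist_clustered_coloring_comp_card:
  assumes "mdist_clustered_coloring V E m N K f" "x \<in> V"
  shows "finite (induced_comp E {y \<in> V. f y = f x} x) \<and>
    card (induced_comp E {y \<in> V. f y = f x} x) \<le> K"
proof -
  have "f x \<in> {1..N}" using assms by (rule mdist_clustered_coloring_range)
  moreover have "\<forall>i\<in>{1..N}. \<forall>C \<in> induced_components E {y \<in> V. f y = i}. finite C \<and> card C \<le> K"
    using assms(1)[unfolded mdist_clustered_coloring_def,
        THEN conjunct2, THEN conjunct2, THEN conjunct1] .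
  moreover have "induced_comp E {y \<in> V. f y = f x} x \<in> induced_components E {y \<in> V. f y = f x}"
    unfolding induced_components_def using assms(2) by simp
  ultimately show ?thesis by blast
qed

lemma not_reaches_level_from_zero:
  assumes "mdist_clustered_coloring (Zn n) (Ginf_adj n) m N K f"
    and "j < n" "z \<in> Zn n" "f z = Suc j" "z j = 0"
  shows "\<not> reaches_level f n j (int K) z"
proof
  let ?S = "{x \<in> Zn n. f x = Suc j}"
  assume "reaches_level f n j (int K) z"
  then obtain y where y: "(induced_edge (Ginf_adj n) ?S)\<^sup>*\<^sup>* z y" "int K \<le> y j"
    unfolding reaches_level_def by blast
  define C where "C = induced_comp (Ginf_adj n) ?S z"
  have "finite C" "card C \<le> K"
    using mdist_clustered_coloring_comp_card[OF assms(1,3)] by (simp_all add: C_def assms(4))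
  have step: "\<bar>u j - v j\<bar> \<le> 1" if "induced_edge (Ginf_adj n) ?S u v" for u v
    using that assms(2) by (auto simp: induced_edge_def Ginf_adj_iff)
  have "{0..int K} \<subseteq> (\<lambda>u. u j) ` C"
  proof
    fix t assume "t \<in> {0..int K}"
    then obtain u where "(induced_edge (Ginf_adj n) ?S)\<^sup>*\<^sup>* z u" "u j = t"
      using rtranclp_intermediate_value[OF y(1), of "\<lambda>u. u j" t] step y(2) assms(5) by auto
    then show "t \<in> (\<lambda>u. u j) ` C" unfolding C_def induced_comp_eq by blast
  qed
  then have "card {0..int K} \<le> card C"
    using \<open>finite C\<close> by (meson card_image_le card_mono finite_imageI order_trans)
  with \<open>card C \<le> K\<close> show False by simp
qed

lemma kuhn_simplex_Ginf_adj:
  assumes "kuhn_simplex p n b u s" "a \<in> s" "a' \<in> s" "a \<noteq> a'"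
  shows "Ginf_adj n (lattice_point n a) (lattice_point n a')"
proof -
  obtain i where "a i \<noteq> a' i" using assms(4) by auto
  then have "i < n"
    using kuhn_simplex.out_eq_p[OF assms(1,2)] kuhn_simplex.out_eq_p[OF assms(1,3)] by (metis not_le)
  moreover have "\<bar>int (a k) - int (a' k)\<bar> \<le> 1" for k
  proof -
    have "b k \<le> a k" "a k \<le> Suc (b k)" "b k \<le> a' k" "a' k \<le> Suc (b k)"
      using kuhn_simplex.base_le[OF assms(1)] kuhn_simplex.le_Suc_base[OF assms(1)] assms(2,3)
      by auto
    then show ?thesis by linarith
  qed
  ultimately show ?thesis
    using \<open>a i \<noteq> a' i\<close> unfolding Ginf_adj_iff lattice_point_def by auto
qed

lemma no_mdist_clustered_coloring_le_dim:
  assumes "N \<le> n"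
  shows "\<not> mdist_clustered_coloring (Zn n) (Ginf_adj n) m N K f"
proof
  assume col: "mdist_clustered_coloring (Zn n) (Ginf_adj n) m N K f"
  let ?lab = "kuhn_label f n K"
  have "\<forall>x j. (\<forall>j. x j \<le> Suc K) \<and> j < n \<and> x j = 0 \<longrightarrow> ?lab x j = 0"
  proof (intro allI impI)
    fix x j assume x: "(\<forall>j. x j \<le> Suc K) \<and> j < n \<and> x j = 0"
    then have "lattice_point n x j = 0" by (simp add: lattice_point_def)
    with x show "?lab x j = 0"
      using not_reaches_level_from_zero[OF col, of j "lattice_point n x"] lattice_point_Zn
      unfolding kuhn_label_def by auto
  qed
  moreover have "\<forall>x j. (\<forall>j. x j \<le> Suc K) \<and> j < n \<and> x j = Suc K \<longrightarrow> ?lab x j = 1"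
    by (simp add: kuhn_label_def)
  ultimately have "odd (card {s. ksimplex (Suc K) n s \<and> (reduced n \<circ> ?lab) ` s = {..n}})"
    by (rule kuhn_combinatorial[OF zero_less_Suc])
  then have "{s. ksimplex (Suc K) n s \<and> (reduced n \<circ> ?lab) ` s = {..n}} \<noteq> {}"
    by (rule odd_card_imp_not_empty)
  then obtain s where "ksimplex (Suc K) n s" and s_labels: "(reduced n \<circ> ?lab) ` s = {..n}"
    by blast
  then obtain b u where simplex: "kuhn_simplex (Suc K) n b u s"
    by (auto elim: ksimplex.cases)
  have "n \<in> (reduced n \<circ> ?lab) ` s" using s_labels by simp
  then obtain v where v: "v \<in> s" "reduced n (?lab v) = n" by auto
  define c where "c = f (lattice_point n v) - 1"
  have "f (lattice_point n v) \<in> {1..N}"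
    using col lattice_point_Zn by (rule mdist_clustered_coloring_range)
  then have c: "f (lattice_point n v) = Suc c" "c < n" using assms unfolding c_def by auto
  have "c \<in> (reduced n \<circ> ?lab) ` s" using s_labels c(2) by simp
  then obtain w where w: "w \<in> s" "reduced n (?lab w) = c" by auto
  have "?lab v c = 0" using reduced_labelling(2)[of n "?lab v"] v(2) c(2) by simp
  then have no_reach: "\<not> reaches_level f n c (int K) (lattice_point n v)"
    using c(1) unfolding kuhn_label_def by (auto split: if_splits)
  have "?lab w c \<noteq> 0" using reduced_labelling(3)[of n "?lab w"] w(2) c(2) by simp
  then consider "w c = Suc K"
    | "f (lattice_point n w) = Suc c" "reaches_level f n c (int K) (lattice_point n w)"
    unfolding kuhn_label_def by (auto split: if_splits)
  then have "reaches_level f n c (int K) (lattice_point n v)"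
  proof cases
    case 1
    then have "int K \<le> lattice_point n v c"
      using kuhn_simplex.base_le[OF simplex v(1), of c]
        kuhn_simplex.le_Suc_base[OF simplex w(1), of c] c(2)
      by (simp add: lattice_point_def)
    then show ?thesis unfolding reaches_level_def by blast
  next
    case 2
    have "v \<noteq> w" using v(2) w(2) c(2) by auto
    then have "Ginf_adj n (lattice_point n v) (lattice_point n w)"
      using kuhn_simplex_Ginf_adj[OF simplex v(1) w(1)] by blast
    then have "induced_edge (Ginf_adj n) {x \<in> Zn n. f x = Suc c} (lattice_point n v) (lattice_point n w)"
      using c(1) 2(1) lattice_point_Zn unfolding induced_edge_def by blast
    moreover obtain y where
      "(induced_edge (Ginf_adj n) {x \<in> Zn n. f x = Suc c})\<^sup>*\<^sup>* (lattice_point n w) y" "int K \<le> y c"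
      using 2(2) unfolding reaches_level_def by blast
    ultimately show ?thesis
      unfolding reaches_level_def by (meson converse_rtranclp_into_rtranclp)
  qed
  with no_reach show False ..
qed

theorem proposition3p4:
  fixes n m :: nat
  assumes "n \<ge> 1" and "m \<ge> 1"
  shows "chi_star (Zn n) (Ginf_adj n) m = enat (n + 1) \<and>
         K_hat (Zn n) (Ginf_adj n) m \<le> fact n * m ^ n"
proof -
  have col: "mdist_clustered_coloring (Zn n) (Ginf_adj n) m (n + 1) (fact n * m ^ n)
      (cluster_colouring m n)"
    using assms(2) by (rule mdist_clustered_coloring_cluster_colouring)
  have "(LEAST N. \<exists>K f. mdist_clustered_coloring (Zn n) (Ginf_adj n) m N K f) = n + 1"
  proof (rule Least_equality)
    show "\<exists>K f. mdist_clustered_coloring (Zn n) (Ginf_adj n) m (n + 1) K f" using col by blast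
  next
    fix N assume "\<exists>K f. mdist_clustered_coloring (Zn n) (Ginf_adj n) m N K f"
    then show "n + 1 \<le> N" using no_mdist_clustered_coloring_le_dim[of N n m] by force
  qed
  then have chi: "chi_star (Zn n) (Ginf_adj n) m = enat (n + 1)"
    unfolding chi_star_def using col by auto
  have "K_hat (Zn n) (Ginf_adj n) m \<le> fact n * m ^ n"
    unfolding K_hat_def chi using col by (auto intro: Least_le)
  with chi show ?thesis by simp
qed

end
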